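(* Let $n\in\mathbb{N}$, $\Delta T>0$, $D\subset\mathbb{R}^{2n}$, and let $\Phi^{\Delta T}:D\to\mathbb{R}^{2n}$ be the time-$\Delta T$ flow map of a Hamiltonian system. Let $\Omega:=\{I_1x_0+I_2\Phi^{\Delta T}(x_0):x_0\in D\}$ be open and convex, and let $S^{\Delta T}\in C^2(\Omega)\cap H_k(\Omega)$ be a type II generating function of $\Phi^{\Delta T}$ on $\Omega$ (see context). Let $u:=S^{\Delta T}$ and run the gradient Hermite–Birkhoff $f$-greedy algorithm (see context) with index set $\mathcal J=\{1,\dots,2n\}$, producing selected pairs $(x_i,\ell_i)$, surrogates $s_i$ and errors $e_i=S^{\Delta T}-s_i$. For each $m\ge1$ choose $i_m\in\{m+1,\dots,2m\}$ with $\|\nabla e_{i_m}\|_{L^\infty(\Omega)}=\min_{m+1\le i\le 2m}\|\nabla e_i\|_{L^\infty(\Omega)}$. Fix a compact set $K\subset\mathbb{R}^{2n}$ and assume: (i) (Uniform solvability) for every $x_0\in K$ and every $m$ sufficiently large, the implicit equations $y=x_0+\Delta T J_{2n}\nabla S^{\Delta T}(I_1x_0+I_2y)$ and $y=x_0+\Delta T J_{2n}\nabla s_{i_m}(I_1x_0+I_2y)$ have unique solutions $y^\ast=\Phi^{\Delta T}(x_0)$ and $y_m=:x_{\Delta T,i_m}(x_0)$ respectively, with $I_1x_0+I_2y^\ast\in\Omega$ and $I_1x_0+I_2y_m\in\Omega$; (ii) (Uniform Lipschitz continuity in $y$) there is $L_S>0$ with $\sup_{x_0\in K,\ y:\ I_1x_0+I_2y\in\Omega}\|\nabla^2S^{\Delta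 T}(I_1x_0+I_2y)\,I_2\|_2=L_S<\infty$. Assume $\Delta T<1/L_S$. Then there exists a constant $C>0$, independent of $m$ and $x_0$, such that (for all $m$ sufficiently large as in (i)) \[ \sup_{x_0\in K}\|x_{\Delta T,i_m}(x_0)-\Phi^{\Delta T}(x_0)\|_2\le C\,\Delta T\,\sqrt{2n}\,m^{-1/2}\,\|e_{m+1}\|_{H_k(\Omega)}\left[\prod_{i=m+1}^{2m}P_i(x_{i+1},\ell_{i+1})\right]^{1/m}. \]
   Context: $J_{2n}=\begin{bmatrix}0_n&I_n\\-I_n&0_n\end{bmatrix}$; $I_1=\begin{bmatrix}I_n&0\\0&0\end{bmatrix}$, $I_2=\begin{bmatrix}0&0\\0&I_n\end{bmatrix}$. A Hamiltonian system is $\dot x=J_{2n}\nabla\mathcal H(x)$ for $x=(q,p)\in\mathbb{R}^{2n}$, and $\Phi^{\Delta T}(x_0)$ is its solution at time $\Delta T$ with initial value $x_0$. A type II generating function of $\Phi^{\Delta T}$ on $\Omega$ is a function $S^{\Delta T}\in H_k(\Omega)\cap C^1(\Omega)$ with $J_{2n}^\top\frac{\Phi^{\Delta T}(x_0)-x_0}{\Delta T}=\nabla S^{\Delta T}(I_1x_0+I_2\Phi^{\Delta T}(x_0))$ for all $x_0\in D$. Kernel assumptions: $k$ is a symmetric positive definite kernel on $\Omega$ with RKHS $H_k(\Omega)$, $k\in C^2(\Omega\times\Omega)$, and for all $x\in\Omega$, $\ell\in\mathcal J$, $\partial^{(2)}_\ell k(\cdot,x)\in H_k(\Omega)$ with $\partial_\ell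 f(x)=\langle f,\partial^{(2)}_\ell k(\cdot,x)\rangle_{H_k(\Omega)}$ for all $f\in H_k(\Omega)$ ($\partial^{(2)}_\ell$ = derivative in the second argument). Greedy algorithm: for a selection $\{(x_i,\ell_i)\}_{i=1}^m\subset\Omega\times\mathcal J$, $V_m:=\operatorname{span}\{\partial^{(2)}_{\ell_i}k(\cdot,x_i)\}_{i=1}^m$ ($V_0=\{0\}$), $\Pi_m$ the orthogonal projector of $H_k(\Omega)$ onto $V_m$, $s_m:=\Pi_m u$, $e_m:=u-s_m$; starting from $m=0$, for each $m\ge0$ choose $(x_{m+1},\ell_{m+1})\in\operatorname{argmax}_{x\in\Omega,\ell\in\mathcal J}|\partial_\ell e_m(x)|$ (maximizers assumed to exist). Power function: $P_m(x,\ell):=\|(I-\Pi_m)\partial^{(2)}_\ell k(\cdot,x)\|_{H_k(\Omega)}$. $\|\nabla e\|_{L^\infty(\Omega)}:=\sup_{x\in\Omega}\|\nabla e(x)\|_2$. *)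

theory Defs
  imports "HOL-Analysis.Analysis"
begin

text \<open>Phase space R^{2n} = R^n x R^n, x = (q,p); the product norm is the Euclidean 2-norm.\<close>
type_synonym 'n ps = "(real^'n) \<times> (real^'n)"

definition Jmat :: "'n::finite ps \<Rightarrow> 'n ps" where
  "Jmat x = (snd x, - fst x)"

definition JmatT :: "'n::finite ps \<Rightarrow> 'n ps" where
  "JmatT x = (- snd x, fst x)"

definition I1 :: "'n::finite ps \<Rightarrow> 'n ps" where "I1 x = (fst x, 0)"
definition I2 :: "'n::finite ps \<Rightarrow> 'n ps" where "I2 x = (0, snd x)"

definition pdir :: "('a::euclidean_space \<Rightarrow> real) \<Rightarrow> 'a \<Rightarrow> 'a \<Rightarrow> real" where
  "pdir f x l = deriv (\<lambda>t. f (x + t *\<^sub>R l)) 0"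

definition grad_of :: "('a::euclidean_space \<Rightarrow> real) \<Rightarrow> 'a \<Rightarrow> 'a" where
  "grad_of f x = (\<Sum>b\<in>Basis. pdir f x b *\<^sub>R b)"

definition hess_app :: "('a::euclidean_space \<Rightarrow> real) \<Rightarrow> 'a \<Rightarrow> 'a \<Rightarrow> 'a" where
  "hess_app f z v = (\<Sum>i\<in>Basis. (\<Sum>j\<in>Basis. pdir (\<lambda>w. pdir f w i) z j * (v \<bullet> j)) *\<^sub>R i)"

definition C1_on :: "'a::euclidean_space set \<Rightarrow> ('a \<Rightarrow> real) \<Rightarrow> bool" where
  "C1_on U f \<longleftrightarrow> (\<forall>b\<in>Basis. (\<forall>z\<in>U. (\<lambda>t. f (z + t *\<^sub>R b)) differentiable (at 0))
                              \<and> continuous_on U (\<lambda>z. pdir f z b))"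

definition C2_on :: "'a::euclidean_space set \<Rightarrow> ('a \<Rightarrow> real) \<Rightarrow> bool" where
  "C2_on U f \<longleftrightarrow> C1_on U f \<and> (\<forall>b\<in>Basis. C1_on U (\<lambda>z. pdir f z b))"

definition is_ham_flow :: "('n::finite ps \<Rightarrow> real) \<Rightarrow> real \<Rightarrow> 'n ps set \<Rightarrow> ('n ps \<Rightarrow> 'n ps) \<Rightarrow> bool" where
  "is_ham_flow H dT D Phi \<longleftrightarrow> C1_on UNIV H \<and>
     (\<forall>x0\<in>D. \<exists>x::real \<Rightarrow> 'n ps. x 0 = x0 \<and> x dT = Phi x0 \<and>
        (\<forall>t\<in>{0..dT}. (x has_vector_derivative Jmat (grad_of H (x t))) (at t within {0..dT})))"

definition spd_kernel :: "'a set \<Rightarrow> ('a \<Rightarrow> 'a \<Rightarrow> real) \<Rightarrow> bool" where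
  "spd_kernel U k \<longleftrightarrow> (\<forall>x\<in>U. \<forall>y\<in>U. k x y = k y x) \<and>
     (\<forall>X c. finite X \<longrightarrow> X \<subseteq> U \<longrightarrow> (\<exists>x\<in>X. c x \<noteq> (0::real)) \<longrightarrow>
        (\<Sum>x\<in>X. \<Sum>y\<in>X. c x * c y * k x y) > 0)"

text \<open>RKHS H_k(U), represented by a Hilbert space 'h and the map kx x = k(.,x) in 'h:
  an element f of 'h is the function z \<mapsto> <f, kx z> on U (reproducing property),
  k(x,y) = <kx x, kx y>, and the kernel sections are dense (so f is determined by its
  values on U, i.e. 'h is isometric to the RKHS of k on U).\<close>
definition is_rkhs :: "'a set \<Rightarrow> ('a \<Rightarrow> 'a \<Rightarrow> real) \<Rightarrow> ('a \<Rightarrow> 'h::{real_inner,complete_space}) \<Rightarrow> bool" where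
  "is_rkhs U k kx \<longleftrightarrow> (\<forall>x\<in>U. \<forall>y\<in>U. k x y = kx x \<bullet> kx y) \<and> closure (span (kx ` U)) = UNIV"

definition fn_of :: "('a \<Rightarrow> 'h::real_inner) \<Rightarrow> 'h \<Rightarrow> 'a \<Rightarrow> real" where
  "fn_of kx f = (\<lambda>z. f \<bullet> kx z)"

definition orth_proj :: "'h::real_inner set \<Rightarrow> 'h \<Rightarrow> 'h" where
  "orth_proj V u = (THE v. v \<in> V \<and> (\<forall>w\<in>V. (u - v) \<bullet> w = 0))"

definition gspace :: "('a \<Rightarrow> 'a \<Rightarrow> 'h::real_vector) \<Rightarrow> (nat \<Rightarrow> 'a) \<Rightarrow> (nat \<Rightarrow> 'a) \<Rightarrow> nat \<Rightarrow> 'h set" where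
  "gspace dK xs ls m = span ((\<lambda>i. dK (xs i) (ls i)) ` {1..m})"

definition gen_fun_II :: "real \<Rightarrow> 'n::finite ps set \<Rightarrow> ('n ps \<Rightarrow> 'n ps) \<Rightarrow> 'n ps set \<Rightarrow> ('n ps \<Rightarrow> real) \<Rightarrow> bool" where
  "gen_fun_II dT D Phi U S \<longleftrightarrow> C1_on U S \<and>
     (\<forall>x0\<in>D. JmatT ((1 / dT) *\<^sub>R (Phi x0 - x0)) = grad_of S (I1 x0 + I2 (Phi x0)))"

definition Linf_grad :: "'a::euclidean_space set \<Rightarrow> ('a \<Rightarrow> real) \<Rightarrow> ereal" where
  "Linf_grad U f = (SUP z\<in>U. ereal (norm (grad_of f z)))"

end

theory Submission
  imports Defs
begin

(*
  Each greedy step adds the direction q_i = (I - Pi_i) dK(x_(i+1), l_(i+1)) and lowers the squared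
  residual norm by exactly <e_i, dK(x_(i+1), l_(i+1))>^2 / |q_i|^2, where the numerator is the square
  of the largest partial derivative of e_i and |q_i| = P_i(x_(i+1), l_(i+1)). Telescoping over
  m < i <= 2m and AM-GM bound the geometric mean of these maximal partial derivatives by
  |e_(m+1)| / sqrt m times the geometric mean of the power function values; the index i_m of smallest
  gradient sup-norm does at least as well as this mean, and a gradient is at most sqrt (2n) times
  its largest partial derivative. Finally both maps solve fixed point equations
  y = x0 + dT J grad(.)(I1 x0 + I2 y) whose right-hand sides are (dT L_S)-Lipschitz in y, so the
  solutions differ by at most dT / (1 - dT L_S) times the gradient error at the approximate one.
*)

definition is_orth_proj :: "'h::real_inner set \<Rightarrow> 'h \<Rightarrow> 'h \<Rightarrow> bool" where
  "is_orth_proj V u p \<longleftrightarrow> p \<in> V \<and> (\<forall>w\<in>V. orthogonal (u - p) w)"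

lemma orth_proj_eqI:
  assumes "subspace V" "is_orth_proj V u p"
  shows "orth_proj V u = p"
  unfolding orth_proj_def
proof (rule the_equality)
  show "p \<in> V \<and> (\<forall>w\<in>V. (u - p) \<bullet> w = 0)"
    using assms(2) by (simp add: is_orth_proj_def orthogonal_def)
next
  fix p' assume p': "p' \<in> V \<and> (\<forall>w\<in>V. (u - p') \<bullet> w = 0)"
  have "p - p' \<in> V" using p' assms by (simp add: is_orth_proj_def subspace_diff)
  then have "(p - p') \<bullet> (p - p') = (u - p') \<bullet> (p - p') - (u - p) \<bullet> (p - p')"
    by (simp add: inner_diff_left)
  also have "\<dots> = 0"
    using p' assms(2) \<open>p - p' \<in> V\<close> by (simp add: is_orth_proj_def orthogonal_def)
  finally show "p' = p" by simp
qed

text \<open>If \<open>w \<in> V\<close> then \<open>q = 0\<close> and the added term vanishes, as \<open>x / 0 = 0\<close>.\<close>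
lemma is_orth_proj_insert:
  assumes V: "subspace V" and p: "is_orth_proj V u p" and pw: "is_orth_proj V w pw"
  defines "q \<equiv> w - pw"
  shows "is_orth_proj (span (insert w V)) u (p + ((u - p) \<bullet> q / (q \<bullet> q)) *\<^sub>R q)"
proof -
  define c where "c = (u - p) \<bullet> q / (q \<bullet> q)"
  have spanV: "span V = V" using V by (simp add: span_eq_iff)
  have pV: "p \<in> V" and pwV: "pw \<in> V" using p pw by (auto simp: is_orth_proj_def)
  have oq: "q \<bullet> y = 0" and ou: "(u - p) \<bullet> y = 0" if "y \<in> V" for y
    using p pw that by (auto simp: is_orth_proj_def orthogonal_def q_def)
  have "(u - p - c *\<^sub>R q) \<bullet> w = (u - p - c *\<^sub>R q) \<bullet> (q + pw)"
    by (simp add: q_def)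
  also have "\<dots> = (u - p) \<bullet> q - c * (q \<bullet> q)"
    using ou[OF pwV] oq[OF pwV] by (simp add: inner_add_right inner_diff_left)
  also have "\<dots> = 0"
    by (cases "q = 0") (simp_all add: c_def)
  finally have ow: "(u - p - c *\<^sub>R q) \<bullet> w = 0" .
  show ?thesis
    unfolding is_orth_proj_def orthogonal_def c_def[symmetric]
  proof (intro conjI ballI)
    have "(p + c *\<^sub>R q) - c *\<^sub>R w = p - c *\<^sub>R pw" by (simp add: q_def algebra_simps)
    also have "\<dots> \<in> V" using V pV pwV by (simp add: subspace_diff subspace_scale)
    finally show "p + c *\<^sub>R q \<in> span (insert w V)"
      unfolding span_insert spanV by blast
  next
    fix y assume "y \<in> span (insert w V)"
    then obtain t where z: "y - t *\<^sub>R w \<in> V" unfolding span_insert spanV by blast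
    have "(u - (p + c *\<^sub>R q)) \<bullet> (y - t *\<^sub>R w) = 0"
      using ou[OF z] oq[OF z] by (simp add: inner_diff_left inner_add_left)
    then show "(u - (p + c *\<^sub>R q)) \<bullet> y = 0"
      using ow by (simp add: inner_diff_right algebra_simps)
  qed
qed

lemma subspace_gspace: "subspace (gspace dK xs ls m)"
  by (simp add: gspace_def subspace_span)

lemma gspace_Suc:
  "gspace dK xs ls (Suc m) = span (insert (dK (xs (Suc m)) (ls (Suc m))) (gspace dK xs ls m))"
proof -
  have "{1..Suc m} = insert (Suc m) {1..m}" by auto
  then show ?thesis unfolding gspace_def by (simp only: image_insert span_insert span_span)
qed

lemma is_orth_proj_gspace:
  "is_orth_proj (gspace dK xs ls m) v (orth_proj (gspace dK xs ls m) (v::'h::real_inner))"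
proof -
  have "\<exists>p. is_orth_proj (gspace dK xs ls m) v p" for v :: 'h
  proof (induction m arbitrary: v)
    case 0
    show ?case by (rule exI[of _ 0]) (simp add: is_orth_proj_def gspace_def orthogonal_clauses)
  next
    case (Suc m)
    obtain p pw where "is_orth_proj (gspace dK xs ls m) v p"
      and "is_orth_proj (gspace dK xs ls m) (dK (xs (Suc m)) (ls (Suc m))) pw"
      using Suc by blast
    from is_orth_proj_insert[OF subspace_gspace this] show ?case unfolding gspace_Suc by blast
  qed
  then show ?thesis using orth_proj_eqI[OF subspace_gspace] by metis
qed

lemma orth_proj_residual_Pythagoras:
  assumes "subspace W" "V \<subseteq> W" "is_orth_proj V u p" "is_orth_proj W u p'"
  shows "(norm (u - p))\<^sup>2 = (norm (u - p'))\<^sup>2 + (norm (p' - p))\<^sup>2"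
proof -
  have "p' - p \<in> W" using assms by (auto simp: is_orth_proj_def subspace_diff)
  then have "orthogonal (u - p') (p' - p)" using assms(4) by (simp add: is_orth_proj_def)
  then show ?thesis using norm_add_Pythagorean[of "u - p'" "p' - p"] by simp
qed

lemma orth_proj_insert_gain:
  assumes V: "subspace V" and p: "is_orth_proj V u p" and pw: "is_orth_proj V w pw"
    and p': "is_orth_proj (span (insert w V)) u p'"
  shows "((u - p) \<bullet> w)\<^sup>2 = ((norm (u - p))\<^sup>2 - (norm (u - p'))\<^sup>2) * (norm (w - pw))\<^sup>2"
proof -
  define q where "q = w - pw"
  define c where "c = (u - p) \<bullet> q / (q \<bullet> q)"
  have W: "subspace (span (insert w V))" by (rule subspace_span)
  have "p' = orth_proj (span (insert w V)) u" using orth_proj_eqI[OF W p'] by simp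
  also have "\<dots> = p + c *\<^sub>R q"
    using orth_proj_eqI[OF W is_orth_proj_insert[OF V p pw]] by (simp add: c_def q_def)
  finally have p'_eq: "p' - p = c *\<^sub>R q" by simp
  have "V \<subseteq> span (insert w V)" using span_superset[of "insert w V"] by blast
  from orth_proj_residual_Pythagoras[OF W this p p']
  have gain: "(norm (u - p))\<^sup>2 - (norm (u - p'))\<^sup>2 = c\<^sup>2 * (q \<bullet> q)"
    by (simp add: p'_eq power_mult_distrib power2_norm_eq_inner)
  have "(u - p) \<bullet> pw = 0" using p pw by (simp add: is_orth_proj_def orthogonal_def)
  then have "(u - p) \<bullet> w = (u - p) \<bullet> q" by (simp add: q_def inner_diff_right)
  then show ?thesis
    unfolding q_def[symmetric] gain power2_norm_eq_inner[of q]
    by (cases "q = 0") (simp_all add: c_def power2_eq_square)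
qed

lemma gspace_residual_gain:
  fixes u :: "'h::real_inner" and dK :: "'a \<Rightarrow> 'a \<Rightarrow> 'h" and xs ls :: "nat \<Rightarrow> 'a" and m :: nat
  defines "e \<equiv> \<lambda>m. u - orth_proj (gspace dK xs ls m) u"
    and "w \<equiv> dK (xs (Suc m)) (ls (Suc m))"
  shows "(e m \<bullet> w)\<^sup>2 = ((norm (e m))\<^sup>2 - (norm (e (Suc m)))\<^sup>2)
                          * (norm (w - orth_proj (gspace dK xs ls m) w))\<^sup>2"
    and "norm (e (Suc m)) \<le> norm (e m)"
proof -
  note proj = is_orth_proj_gspace[of dK xs ls]
  have sub: "gspace dK xs ls m \<subseteq> gspace dK xs ls (Suc m)"
    unfolding gspace_def by (intro span_mono image_mono) auto
  have "is_orth_proj (span (insert w (gspace dK xs ls m))) u (orth_proj (gspace dK xs ls (Suc m)) u)"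
    using proj[of "Suc m" u] unfolding w_def gspace_Suc .
  from orth_proj_insert_gain[OF subspace_gspace proj proj this]
  show "(e m \<bullet> w)\<^sup>2 = ((norm (e m))\<^sup>2 - (norm (e (Suc m)))\<^sup>2)
                     * (norm (w - orth_proj (gspace dK xs ls m) w))\<^sup>2"
    unfolding e_def .
  from orth_proj_residual_Pythagoras[OF subspace_gspace sub proj proj]
  have "(norm (e (Suc m)))\<^sup>2 \<le> (norm (e m))\<^sup>2" unfolding e_def by simp
  then show "norm (e (Suc m)) \<le> norm (e m)" by (rule power2_le_imp_le) simp
qed

lemma le_geometric_mean:
  fixes b :: "'a \<Rightarrow> real"
  assumes "finite A" "A \<noteq> {}" "x \<ge> 0" "\<And>i. i \<in> A \<Longrightarrow> x \<le> b i"
  shows "x \<le> (\<Prod>i\<in>A. b i) powr (1 / card A)"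
proof -
  have n: "card A > 0" using assms by (simp add: card_gt_0_iff)
  have "x = (x ^ card A) powr (1 / card A)"
    using assms(3) n by (simp add: powr_realpow'[symmetric] powr_powr)
  also have "x ^ card A = (\<Prod>i\<in>A. x)" by simp
  also have "(\<Prod>i\<in>A. x) powr (1 / card A) \<le> (\<Prod>i\<in>A. b i) powr (1 / card A)"
    using assms by (intro powr_mono2 prod_mono prod_nonneg) auto
  finally show ?thesis .
qed

lemma geometric_mean_le_budget:
  fixes a d P :: "'a \<Rightarrow> real"
  assumes A: "finite A" "A \<noteq> {}"
    and a: "\<And>i. i \<in> A \<Longrightarrow> (a i)\<^sup>2 = d i * (P i)\<^sup>2"
    and d: "\<And>i. i \<in> A \<Longrightarrow> d i \<ge> 0" and P: "\<And>i. i \<in> A \<Longrightarrow> P i \<ge> 0"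
    and budget: "(\<Sum>i\<in>A. d i) \<le> E\<^sup>2" and "E \<ge> 0"
  shows "(\<Prod>i\<in>A. \<bar>a i\<bar>) powr (1 / card A)
           \<le> E / sqrt (card A) * (\<Prod>i\<in>A. P i) powr (1 / card A)"
proof -
  define n where "n = card A"
  have "\<bar>a i\<bar> = d i powr (1/2) * P i" if "i \<in> A" for i
    using a[OF that] d[OF that] P[OF that]
    by (metis powr_half_sqrt real_sqrt_abs real_sqrt_mult real_sqrt_unique)
  then have "(\<Prod>i\<in>A. \<bar>a i\<bar>) = (\<Prod>i\<in>A. d i) powr (1/2) * (\<Prod>i\<in>A. P i)"
    by (simp add: prod.distrib prod_powr_distrib)
  then have prod_a: "(\<Prod>i\<in>A. \<bar>a i\<bar>) powr (1 / n)
      = sqrt ((\<Prod>i\<in>A. d i) powr (1 / n)) * (\<Prod>i\<in>A. P i) powr (1 / n)"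
    by (simp add: powr_mult powr_powr powr_half_sqrt[symmetric] mult.commute)
  have "(\<Prod>i\<in>A. d i) powr (1 / n) \<le> (\<Sum>i\<in>A. d i / n)"
    using arith_geom_mean[OF A d] by (simp add: n_def)
  also have "\<dots> \<le> E\<^sup>2 / n" using budget by (simp add: sum_divide_distrib[symmetric] divide_right_mono)
  finally have "sqrt ((\<Prod>i\<in>A. d i) powr (1 / n)) \<le> E / sqrt n"
    using \<open>E \<ge> 0\<close> by (metis real_sqrt_divide real_sqrt_le_mono real_sqrt_abs abs_of_nonneg)
  then show ?thesis
    unfolding n_def[symmetric] prod_a by (rule mult_right_mono) simp
qed

lemma gspace_residual_geometric_mean:
  fixes u :: "'h::real_inner" and dK :: "'a \<Rightarrow> 'a \<Rightarrow> 'h" and xs ls :: "nat \<Rightarrow> 'a"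
  defines "e \<equiv> \<lambda>m. u - orth_proj (gspace dK xs ls m) u"
    and "P \<equiv> \<lambda>m x l. norm (dK x l - orth_proj (gspace dK xs ls m) (dK x l))"
  assumes "m > 0"
  shows "(\<Prod>i\<in>{m+1..2*m}. \<bar>e i \<bullet> dK (xs (Suc i)) (ls (Suc i))\<bar>) powr (1 / m)
           \<le> norm (e (Suc m)) / sqrt m * (\<Prod>i\<in>{m+1..2*m}. P i (xs (Suc i)) (ls (Suc i))) powr (1 / m)"
proof -
  define d where "d i = (norm (e i))\<^sup>2 - (norm (e (Suc i)))\<^sup>2" for i
  have "(\<Sum>i\<in>{m+1..2*m}. d i) = (norm (e (Suc m)))\<^sup>2 - (norm (e (Suc (2*m))))\<^sup>2"
    using sum_Suc_diff'[of "Suc m" "Suc (2*m)" "\<lambda>i. - (norm (e i))\<^sup>2"]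
    by (simp add: d_def atLeastLessThanSuc_atLeastAtMost)
  then have "(\<Sum>i\<in>{m+1..2*m}. d i) \<le> (norm (e (Suc m)))\<^sup>2" by simp
  moreover have "d i \<ge> 0" for i
    using gspace_residual_gain(2)[of u dK xs ls i] by (simp add: d_def e_def power_mono)
  moreover have "(e i \<bullet> dK (xs (Suc i)) (ls (Suc i)))\<^sup>2 = d i * (P i (xs (Suc i)) (ls (Suc i)))\<^sup>2" for i
    using gspace_residual_gain(1)[of u dK xs ls i] by (simp add: e_def P_def d_def)
  moreover have "P i x l \<ge> 0" for i x l by (simp add: P_def)
  ultimately show ?thesis
    using geometric_mean_le_budget[of "{m+1..2*m}" "\<lambda>i. e i \<bullet> dK (xs (Suc i)) (ls (Suc i))" d
        "\<lambda>i. P i (xs (Suc i)) (ls (Suc i))" "norm (e (Suc m))"] \<open>m > 0\<close>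
    by simp
qed

lemma has_real_derivative_pdir:
  assumes f: "C1_on U f" and "y + t *\<^sub>R b \<in> U" and b: "b \<in> Basis"
  shows "((\<lambda>s. f (y + s *\<^sub>R b)) has_real_derivative pdir f (y + t *\<^sub>R b) b) (at t)"
proof -
  have "(\<lambda>s. f ((y + t *\<^sub>R b) + s *\<^sub>R b)) differentiable (at 0)"
    using assms by (simp add: C1_on_def)
  then have "((\<lambda>s. f ((y + t *\<^sub>R b) + s *\<^sub>R b)) has_real_derivative pdir f (y + t *\<^sub>R b) b) (at 0)"
    unfolding pdir_def by (simp add: DERIV_deriv_iff_real_differentiable)
  then have "((\<lambda>s. f (y + (s + t) *\<^sub>R b)) has_real_derivative pdir f (y + t *\<^sub>R b) b) (at 0)"
    by (simp add: algebra_simps scaleR_add_left)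
  then show ?thesis using DERIV_shift[of "\<lambda>s. f (y + s *\<^sub>R b)" _ 0 t] by simp
qed

lemma C1_on_increment_along_Basis:
  assumes f: "C1_on U f" and b: "b \<in> Basis"
    and seg: "\<And>s. s \<in> closed_segment 0 t \<Longrightarrow> y + s *\<^sub>R b \<in> U \<and> \<bar>pdir f (y + s *\<^sub>R b) b - c\<bar> \<le> \<epsilon>"
  shows "\<bar>f (y + t *\<^sub>R b) - f y - c * t\<bar> \<le> \<epsilon> * \<bar>t\<bar>"
proof -
  define g where "g s = f (y + s *\<^sub>R b) - c * s" for s
  have "(g has_derivative (\<lambda>h. (pdir f (y + s *\<^sub>R b) b - c) * h)) (at s within closed_segment 0 t)"
    if "s \<in> closed_segment 0 t" for s
  proof -
    have "(g has_real_derivative (pdir f (y + s *\<^sub>R b) b - c)) (at s)"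
      unfolding g_def using has_real_derivative_pdir[OF f _ b, of y s] seg[OF that]
      by (auto intro!: derivative_eq_intros)
    then show ?thesis unfolding has_field_derivative_def by (rule has_derivative_at_withinI)
  qed
  moreover have "onorm (\<lambda>h. (pdir f (y + s *\<^sub>R b) b - c) * h) \<le> \<epsilon>" if "s \<in> closed_segment 0 t" for s
    using seg[OF that] by (intro onorm_le) (simp add: abs_mult mult_right_mono)
  ultimately have "norm (g t - g 0) \<le> \<epsilon> * norm (t - 0)"
    by (intro differentiable_bound[OF convex_closed_segment]) auto
  then show ?thesis by (simp add: g_def)
qed

lemma norm_change_Basis_coord_le:
  fixes h :: "'a::euclidean_space"
  assumes "c \<in> Basis" "\<bar>s\<bar> \<le> \<bar>h \<bullet> c\<bar>"
  shows "norm (h + (s - h \<bullet> c) *\<^sub>R c) \<le> norm h"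
proof (rule power2_le_imp_le)
  have "(norm (h + (s - h \<bullet> c) *\<^sub>R c))\<^sup>2
      = h \<bullet> h + 2 * (s - h \<bullet> c) * (h \<bullet> c) + (s - h \<bullet> c)\<^sup>2 * (c \<bullet> c)"
    unfolding power2_norm_eq_inner
    by (simp add: inner_add_left inner_add_right inner_commute power2_eq_square algebra_simps)
  also have "\<dots> = (norm h)\<^sup>2 + s\<^sup>2 - (h \<bullet> c)\<^sup>2"
    using assms(1) by (simp add: dot_square_norm power2_eq_square algebra_simps)
  finally have "(norm (h + (s - h \<bullet> c) *\<^sub>R c))\<^sup>2 = (norm h)\<^sup>2 + s\<^sup>2 - (h \<bullet> c)\<^sup>2" .
  then show "(norm (h + (s - h \<bullet> c) *\<^sub>R c))\<^sup>2 \<le> (norm h)\<^sup>2"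
    using assms(2) by (simp add: abs_le_square_iff)
qed simp

text \<open>Change the increment one coordinate at a time, using the mean value theorem on each
  coordinate segment; by \<open>norm_change_Basis_coord_le\<close> all intermediate points stay in the ball.\<close>
lemma C1_on_increment_bound:
  fixes f :: "'a::euclidean_space \<Rightarrow> real"
  assumes f: "C1_on U f" and ball: "ball z r \<subseteq> U"
    and near: "\<And>x b. x \<in> ball z r \<Longrightarrow> b \<in> Basis \<Longrightarrow> \<bar>pdir f x b - pdir f z b\<bar> \<le> \<epsilon>"
    and B: "B \<subseteq> Basis"
  shows "norm h < r \<Longrightarrow> \<forall>b\<in>Basis - B. h \<bullet> b = 0 \<Longrightarrow>
           \<bar>f (z + h) - f z - (\<Sum>b\<in>B. pdir f z b * (h \<bullet> b))\<bar> \<le> \<epsilon> * (\<Sum>b\<in>B. \<bar>h \<bullet> b\<bar>)"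
  using finite_subset[OF B finite_Basis] B
proof (induction B arbitrary: h rule: finite_subset_induct')
  case empty
  then show ?case by (simp add: euclidean_all_zero_iff)
next
  case (insert c B)
  define t where "t = h \<bullet> c"
  define h' where "h' = h - t *\<^sub>R c"
  have c: "c \<in> Basis" using insert.hyps by simp
  have small: "norm (h' + s *\<^sub>R c) < r" if "\<bar>s\<bar> \<le> \<bar>t\<bar>" for s
  proof -
    have "h' + s *\<^sub>R c = h + (s - h \<bullet> c) *\<^sub>R c" by (simp add: h'_def t_def algebra_simps)
    then show ?thesis
      using norm_change_Basis_coord_le[OF c, of s h] that insert.prems(1) by (simp add: t_def)
  qed
  have h'b: "h' \<bullet> b = (if b = c then 0 else h \<bullet> b)" if "b \<in> Basis" for b
    using that c by (auto simp: h'_def t_def inner_diff_left inner_Basis)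
  have "\<bar>f (z + h') - f z - (\<Sum>b\<in>B. pdir f z b * (h' \<bullet> b))\<bar> \<le> \<epsilon> * (\<Sum>b\<in>B. \<bar>h' \<bullet> b\<bar>)"
    using small[of 0] insert.prems(2) h'b by (intro insert.IH) auto
  moreover have "(\<Sum>b\<in>B. g b (h' \<bullet> b)) = (\<Sum>b\<in>B. g b (h \<bullet> b))" for g :: "'a \<Rightarrow> real \<Rightarrow> real"
    using insert.hyps h'b by (intro sum.cong) auto
  note this[of "\<lambda>b x. pdir f z b * x"] this[of "\<lambda>b x. \<bar>x\<bar>"]
  moreover have "\<bar>f ((z + h') + t *\<^sub>R c) - f (z + h') - pdir f z c * t\<bar> \<le> \<epsilon> * \<bar>t\<bar>"
  proof (rule C1_on_increment_along_Basis[OF f c])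
    fix s assume "s \<in> closed_segment 0 t"
    then have "\<bar>s\<bar> \<le> \<bar>t\<bar>" by (auto simp: closed_segment_eq_real_ivl split: if_splits)
    then have "(z + h') + s *\<^sub>R c \<in> ball z r"
      using small by (metis add.assoc add.right_neutral dist_add_cancel dist_0_norm mem_ball)
    then show "(z + h') + s *\<^sub>R c \<in> U \<and> \<bar>pdir f ((z + h') + s *\<^sub>R c) c - pdir f z c\<bar> \<le> \<epsilon>"
      using ball near c by blast
  qed
  moreover have "(z + h') + t *\<^sub>R c = z + h" by (simp add: h'_def)
  ultimately have "\<bar>f (z + h) - f z - (pdir f z c * t + (\<Sum>b\<in>B. pdir f z b * (h \<bullet> b)))\<bar>
      \<le> \<epsilon> * \<bar>t\<bar> + \<epsilon> * (\<Sum>b\<in>B. \<bar>h \<bullet> b\<bar>)"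
    by (smt (verit, best))
  then show ?case
    using insert.hyps by (simp add: t_def distrib_left)
qed

lemma C1_on_has_derivative:
  fixes f :: "'a::euclidean_space \<Rightarrow> real"
  assumes U: "open U" and f: "C1_on U f" and z: "z \<in> U"
  shows "(f has_derivative (\<lambda>h. \<Sum>b\<in>Basis. pdir f z b * (h \<bullet> b))) (at z)"
  unfolding has_derivative_at_alt
proof (intro conjI allI impI)
  show "bounded_linear (\<lambda>h. \<Sum>b\<in>Basis. pdir f z b * (h \<bullet> b))"
    by (intro bounded_linear_sum bounded_linear_const_mult bounded_linear_inner_left)
next
  fix e :: real assume "e > 0"
  define \<epsilon> where "\<epsilon> = e / DIM('a)"
  have "\<epsilon> > 0" using \<open>e > 0\<close> by (simp add: \<epsilon>_def)
  have "isCont (\<lambda>x. pdir f x b) z" if "b \<in> Basis" for b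
    using f that U z by (simp add: C1_on_def continuous_on_eq_continuous_at)
  then have "\<forall>\<^sub>F x in at z. x \<in> U \<and> (\<forall>b\<in>Basis. dist (pdir f x b) (pdir f z b) < \<epsilon>)"
    using \<open>\<epsilon> > 0\<close> eventually_at_in_open'[OF U z]
    by (auto intro!: eventually_conj eventually_ball_finite tendstoD simp: isCont_def)
  then obtain r where "r > 0"
    and r: "\<And>x. x \<noteq> z \<Longrightarrow> dist x z < r \<Longrightarrow> x \<in> U \<and> (\<forall>b\<in>Basis. \<bar>pdir f x b - pdir f z b\<bar> < \<epsilon>)"
    unfolding eventually_at dist_real_def by auto
  have ball: "ball z r \<subseteq> U" using r z by (force simp: dist_commute)
  have near: "\<bar>pdir f x b - pdir f z b\<bar> \<le> \<epsilon>" if "x \<in> ball z r" "b \<in> Basis" for x b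
    using r[of x] that \<open>\<epsilon> > 0\<close> by (cases "x = z") (auto simp: dist_commute less_imp_le)
  show "\<exists>d>0. \<forall>y. norm (y - z) < d \<longrightarrow>
      norm (f y - f z - (\<Sum>b\<in>Basis. pdir f z b * ((y - z) \<bullet> b))) \<le> e * norm (y - z)"
  proof (intro exI[of _ r] conjI allI impI \<open>r > 0\<close>)
    fix y assume y: "norm (y - z) < r"
    have "\<bar>f (z + (y - z)) - f z - (\<Sum>b\<in>Basis. pdir f z b * ((y - z) \<bullet> b))\<bar>
          \<le> \<epsilon> * (\<Sum>b\<in>Basis. \<bar>(y - z) \<bullet> b\<bar>)"
      using C1_on_increment_bound[OF f ball near order_refl y] by simp
    also have "\<dots> \<le> \<epsilon> * (DIM('a) * norm (y - z))"
      using \<open>\<epsilon> > 0\<close> sum_bounded_above[of Basis "\<lambda>b. \<bar>(y - z) \<bullet> b\<bar>" "norm (y - z)"] Basis_le_norm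
      by (intro mult_left_mono) auto
    also have "\<dots> = e * norm (y - z)" by (simp add: \<epsilon>_def)
    finally show "norm (f y - f z - (\<Sum>b\<in>Basis. pdir f z b * ((y - z) \<bullet> b))) \<le> e * norm (y - z)"
      by simp
  qed
qed

lemma has_vector_derivative_grad_of_line:
  fixes S :: "'a::euclidean_space \<Rightarrow> real"
  assumes U: "open U" and S: "C2_on U S" and "z + t *\<^sub>R w \<in> U"
  shows "((\<lambda>t. grad_of S (z + t *\<^sub>R w)) has_vector_derivative hess_app S (z + t *\<^sub>R w) w) (at t)"
proof -
  define H where "H i j = pdir (\<lambda>x. pdir S x i) (z + t *\<^sub>R w) j" for i j
  have "((\<lambda>t. pdir S (z + t *\<^sub>R w) i) has_derivative (\<lambda>s. s * (\<Sum>j\<in>Basis. H i j * (w \<bullet> j)))) (at t)"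
    if i: "i \<in> Basis" for i
  proof -
    have "C1_on U (\<lambda>x. pdir S x i)" using S i by (simp add: C2_on_def)
    from C1_on_has_derivative[OF U this assms(3)]
    have "((\<lambda>x. pdir S x i) has_derivative (\<lambda>h. \<Sum>j\<in>Basis. H i j * (h \<bullet> j))) (at (z + t *\<^sub>R w))"
      by (simp add: H_def)
    moreover have "((\<lambda>t. z + t *\<^sub>R w) has_derivative (\<lambda>s. s *\<^sub>R w)) (at t)"
      by (auto intro!: derivative_eq_intros)
    ultimately have "((\<lambda>x. pdir S x i) \<circ> (\<lambda>t. z + t *\<^sub>R w) has_derivative
                      (\<lambda>h. \<Sum>j\<in>Basis. H i j * (h \<bullet> j)) \<circ> (\<lambda>s. s *\<^sub>R w)) (at t)"
      by (rule diff_chain_at[rotated])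
    then show ?thesis by (simp add: o_def sum_distrib_left algebra_simps)
  qed
  then have "((\<lambda>t. \<Sum>i\<in>Basis. pdir S (z + t *\<^sub>R w) i *\<^sub>R i)
              has_derivative (\<lambda>s. \<Sum>i\<in>Basis. (s * (\<Sum>j\<in>Basis. H i j * (w \<bullet> j))) *\<^sub>R i)) (at t)"
    by (intro has_derivative_sum has_derivative_scaleR_left)
  then show ?thesis
    unfolding has_vector_derivative_def grad_of_def hess_app_def H_def
    by (simp add: scaleR_sum_right)
qed

lemma norm_grad_of_diff_le:
  fixes S :: "'a::euclidean_space \<Rightarrow> real"
  assumes U: "open U" and S: "C2_on U S"
    and seg: "\<And>t. t \<in> {0..1} \<Longrightarrow> z + t *\<^sub>R w \<in> U"
    and B: "\<And>t. t \<in> {0..1} \<Longrightarrow> norm (hess_app S (z + t *\<^sub>R w) w) \<le> B"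
  shows "norm (grad_of S (z + w) - grad_of S z) \<le> B"
proof -
  have "((\<lambda>t. grad_of S (z + t *\<^sub>R w)) has_derivative (\<lambda>s. s *\<^sub>R hess_app S (z + t *\<^sub>R w) w))
          (at t within {0..1})" if "t \<in> {0..1}" for t
    using has_vector_derivative_grad_of_line[OF U S seg[OF that]]
    unfolding has_vector_derivative_def by (rule has_derivative_at_withinI)
  moreover have "onorm (\<lambda>s. s *\<^sub>R hess_app S (z + t *\<^sub>R w) w) \<le> B" if "t \<in> {0..1}" for t
    using B[OF that] by (intro onorm_le) (simp add: mult.commute[of B] mult_left_mono)
  ultimately have "norm (grad_of S (z + 1 *\<^sub>R w) - grad_of S (z + 0 *\<^sub>R w)) \<le> B * norm (1 - 0 :: real)"
    by (intro differentiable_bound[of "{0..1}"]) auto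
  then show ?thesis by simp
qed

lemma inner_grad_of_Basis: "b \<in> Basis \<Longrightarrow> grad_of f z \<bullet> b = pdir f z b"
  by (simp add: grad_of_def inner_sum_left inner_Basis if_distrib sum.delta cong: if_cong)

lemma norm_le_sqrt_DIM:
  fixes x :: "'a::euclidean_space"
  assumes "\<And>b. b \<in> Basis \<Longrightarrow> \<bar>x \<bullet> b\<bar> \<le> A"
  shows "norm x \<le> sqrt DIM('a) * A"
proof -
  obtain b :: 'a where "b \<in> Basis" using nonempty_Basis by blast
  then have "A \<ge> 0" using assms[of b] by linarith
  have "norm x = sqrt (\<Sum>b\<in>Basis. (x \<bullet> b)\<^sup>2)"
    by (simp add: norm_eq_sqrt_inner euclidean_inner[of x x] power2_eq_square)
  also have "\<dots> \<le> sqrt (\<Sum>b\<in>(Basis::'a set). A\<^sup>2)"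
    using assms \<open>A \<ge> 0\<close> by (intro real_sqrt_le_mono sum_mono) (simp add: abs_le_square_iff[symmetric])
  also have "\<dots> = sqrt DIM('a) * A" using \<open>A \<ge> 0\<close> by (simp add: real_sqrt_mult)
  finally show ?thesis .
qed

lemma pdir_cong_open:
  assumes "open U" "x \<in> U" "\<And>y. y \<in> U \<Longrightarrow> f y = g y"
  shows "pdir f x l = pdir g x l"
proof -
  have "open ((\<lambda>t. x + t *\<^sub>R l) -` U)"
    using assms(1) by (intro continuous_open_vimage) (auto intro!: continuous_intros)
  then have "\<forall>\<^sub>F t in nhds 0. x + t *\<^sub>R l \<in> U"
    using eventually_nhds_in_open assms(2) by fastforce
  then have "\<forall>\<^sub>F t in nhds 0. f (x + t *\<^sub>R l) = g (x + t *\<^sub>R l)"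
    by (rule eventually_mono) (rule assms(3))
  then show ?thesis unfolding pdir_def by (rule deriv_cong_ev) simp
qed

lemma grad_of_cong_open:
  assumes "open U" "z \<in> U" "\<And>y. y \<in> U \<Longrightarrow> f y = g y"
  shows "grad_of f z = grad_of g z"
  using pdir_cong_open[OF assms] by (simp add: grad_of_def)

lemma grad_of_fn_of_diff:
  assumes "\<And>f b. b \<in> Basis \<Longrightarrow> pdir (fn_of kx f) z b = f \<bullet> dK z b"
  shows "grad_of (fn_of kx (f - g)) z = grad_of (fn_of kx f) z - grad_of (fn_of kx g) z"
  using assms by (simp add: grad_of_def inner_diff_left scaleR_diff_left sum_subtractf)

lemma norm_Jmat [simp]: "norm (Jmat x) = norm x"
  by (cases x) (simp add: Jmat_def norm_Pair add.commute)

lemma Jmat_diff: "Jmat (x - y) = Jmat x - Jmat y"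
  by (simp add: Jmat_def)

lemma linear_I2: "linear I2"
  by (rule linearI) (simp_all add: I2_def)

lemma linear_hess_app: "linear (hess_app S z)"
  by (rule linearI)
    (simp_all add: hess_app_def inner_add_left distrib_left sum.distrib scaleR_add_left
      scaleR_sum_right sum_distrib_left algebra_simps)

lemma implicit_step_stability:
  fixes S T :: "'n::finite ps \<Rightarrow> real"
  assumes U: "open U" "convex U" and S: "C2_on U S"
    and ys: "I1 x0 + I2 ys \<in> U" "ys = x0 + dT *\<^sub>R Jmat (grad_of S (I1 x0 + I2 ys))"
    and y: "I1 x0 + I2 y \<in> U" "y = x0 + dT *\<^sub>R Jmat (grad_of T (I1 x0 + I2 y))"
    and hess: "\<And>y'. I1 x0 + I2 y' \<in> U \<Longrightarrow> onorm (\<lambda>v. hess_app S (I1 x0 + I2 y') (I2 v)) \<le> L"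
    and dT: "0 \<le> dT" "dT * L < 1"
  shows "norm (y - ys) \<le> dT / (1 - dT * L) * norm (grad_of S (I1 x0 + I2 y) - grad_of T (I1 x0 + I2 y))"
proof -
  define z where "z = I1 x0 + I2 y"
  define v where "v = y - ys"
  have line: "I1 x0 + I2 ys + t *\<^sub>R I2 v = I1 x0 + I2 (ys + t *\<^sub>R v)" for t
    by (simp add: I2_def)
  have "I1 x0 + I2 (ys + t *\<^sub>R v) \<in> U" if "t \<in> {0..1}" for t
    using convexD_alt[OF U(2) ys(1) y(1), of t] that
    by (simp add: v_def I2_def algebra_simps)
  moreover have "norm (hess_app S (I1 x0 + I2 y') (I2 v)) \<le> L * norm v" if "I1 x0 + I2 y' \<in> U" for y'
  proof -
    have "bounded_linear (\<lambda>v. hess_app S (I1 x0 + I2 y') (I2 v))"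
      using linear_compose[OF linear_I2 linear_hess_app]
      by (simp add: o_def linear_conv_bounded_linear)
    from onorm[OF this, of v] show ?thesis
      using hess[OF that] by (meson mult_right_mono norm_ge_zero order_trans)
  qed
  ultimately have "norm (grad_of S (I1 x0 + I2 ys + I2 v) - grad_of S (I1 x0 + I2 ys)) \<le> L * norm v"
    by (intro norm_grad_of_diff_le[OF U(1) S]) (simp_all add: line)
  then have lip: "norm (grad_of S z - grad_of S (I1 x0 + I2 ys)) \<le> L * norm v"
    by (simp add: z_def v_def I2_def add.assoc)
  have "v = dT *\<^sub>R Jmat (grad_of S z - grad_of S (I1 x0 + I2 ys))
            - dT *\<^sub>R Jmat (grad_of S z - grad_of T z)"
    unfolding v_def z_def by (subst y(2), subst ys(2)) (simp add: Jmat_diff algebra_simps)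
  then have "norm v \<le> dT * (L * norm v) + dT * norm (grad_of S z - grad_of T z)"
    using lip dT(1) norm_triangle_ineq4 by (smt (verit) mult_left_mono norm_Jmat norm_scaleR)
  then show ?thesis
    using dT by (simp add: v_def z_def field_simps)
qed

lemma f_greedy_gradient_rate:
  fixes kx :: "'a::euclidean_space \<Rightarrow> 'h::real_inner" and dK :: "'a \<Rightarrow> 'a \<Rightarrow> 'h"
    and u :: 'h and xs ls :: "nat \<Rightarrow> 'a"
  defines "e \<equiv> \<lambda>m. u - orth_proj (gspace dK xs ls m) u"
    and "P \<equiv> \<lambda>m x l. norm (dK x l - orth_proj (gspace dK xs ls m) (dK x l))"
  assumes pdir_fn: "\<And>f x l. x \<in> U \<Longrightarrow> l \<in> Basis \<Longrightarrow> pdir (fn_of kx f) x l = f \<bullet> dK x l"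
    and greedy: "\<And>i. xs (Suc i) \<in> U \<and> ls (Suc i) \<in> Basis \<and>
        (\<forall>x\<in>U. \<forall>l\<in>Basis. \<bar>pdir (fn_of kx (e i)) x l\<bar>
                             \<le> \<bar>pdir (fn_of kx (e i)) (xs (Suc i)) (ls (Suc i))\<bar>)"
    and "m > 0"
    and j: "\<forall>i\<in>{m+1..2*m}. Linf_grad U (fn_of kx (e j)) \<le> Linf_grad U (fn_of kx (e i))"
    and "z \<in> U"
  shows "norm (grad_of (fn_of kx (e j)) z)
           \<le> sqrt DIM('a) * (norm (e (Suc m)) / sqrt m
                * (\<Prod>i\<in>{m+1..2*m}. P i (xs (Suc i)) (ls (Suc i))) powr (1 / m))"
proof -
  define a where "a i = e i \<bullet> dK (xs (Suc i)) (ls (Suc i))" for i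
  define g where "g = norm (grad_of (fn_of kx (e j)) z)"
  have Linf_e: "Linf_grad U (fn_of kx (e i)) \<le> ereal (sqrt DIM('a) * \<bar>a i\<bar>)" for i
    unfolding Linf_grad_def
  proof (rule SUP_least)
    fix x assume "x \<in> U"
    have "pdir (fn_of kx (e i)) (xs (Suc i)) (ls (Suc i)) = a i"
      using greedy pdir_fn by (simp add: a_def)
    then have "\<bar>grad_of (fn_of kx (e i)) x \<bullet> b\<bar> \<le> \<bar>a i\<bar>" if "b \<in> Basis" for b
      using greedy[of i] that \<open>x \<in> U\<close> by (simp add: inner_grad_of_Basis)
    then show "ereal (norm (grad_of (fn_of kx (e i)) x)) \<le> ereal (sqrt DIM('a) * \<bar>a i\<bar>)"
      by (simp add: norm_le_sqrt_DIM)
  qed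
  have "ereal g \<le> Linf_grad U (fn_of kx (e j))"
    unfolding Linf_grad_def g_def using \<open>z \<in> U\<close> by (rule SUP_upper2) simp
  then have "ereal g \<le> ereal (sqrt DIM('a) * \<bar>a i\<bar>)" if "i \<in> {m+1..2*m}" for i
    using j that Linf_e[of i] by (meson order_trans)
  then have "g / sqrt DIM('a) \<le> \<bar>a i\<bar>" if "i \<in> {m+1..2*m}" for i
    using that by (simp add: pos_divide_le_eq mult.commute)
  then have "g / sqrt DIM('a) \<le> (\<Prod>i\<in>{m+1..2*m}. \<bar>a i\<bar>) powr (1 / m)"
    using le_geometric_mean[of "{m+1..2*m}" "g / sqrt DIM('a)" "\<lambda>i. \<bar>a i\<bar>"] \<open>m > 0\<close>
    by (simp add: g_def)
  also have "\<dots> \<le> norm (e (Suc m)) / sqrt m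
                * (\<Prod>i\<in>{m+1..2*m}. P i (xs (Suc i)) (ls (Suc i))) powr (1 / m)"
    using gspace_residual_geometric_mean[OF \<open>m > 0\<close>] by (simp add: a_def e_def P_def)
  finally show ?thesis by (simp add: g_def pos_divide_le_eq mult.commute)
qed

theorem theorem2:
  fixes dT L_S :: real and D K \<Omega> :: "'n::finite ps set" and Phi :: "'n ps \<Rightarrow> 'n ps"
    and H S :: "'n ps \<Rightarrow> real"
    and k :: "'n ps \<Rightarrow> 'n ps \<Rightarrow> real"
    and kx :: "'n ps \<Rightarrow> 'h::{real_inner,complete_space}"
    and dK :: "'n ps \<Rightarrow> 'n ps \<Rightarrow> 'h" and u :: 'h
    and xs ls :: "nat \<Rightarrow> 'n ps" and im :: "nat \<Rightarrow> nat"
    and X :: "nat \<Rightarrow> 'n ps \<Rightarrow> 'n ps" and M :: nat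
  defines "s \<equiv> \<lambda>m. orth_proj (gspace dK xs ls m) u"
    and "e \<equiv> \<lambda>m. u - orth_proj (gspace dK xs ls m) u"
    and "P \<equiv> \<lambda>m x l. norm (dK x l - orth_proj (gspace dK xs ls m) (dK x l))"
  assumes dT_pos: "dT > 0"
    and flow: "is_ham_flow H dT D Phi"
    and Omega_def: "\<Omega> = {I1 x0 + I2 (Phi x0) | x0. x0 \<in> D}"
    and Omega_open: "open \<Omega>" and Omega_convex: "convex \<Omega>"
    and k_spd: "spd_kernel \<Omega> k"
    and k_C2: "C2_on (\<Omega> \<times> \<Omega>) (\<lambda>(x, y). k x y)"
    and rkhs: "is_rkhs \<Omega> k kx"
    and dK_prop: "\<forall>x\<in>\<Omega>. \<forall>l\<in>Basis.
        (\<forall>y\<in>\<Omega>. fn_of kx (dK x l) y = pdir (k y) x l) \<and>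
        (\<forall>f. ((\<lambda>t. fn_of kx f (x + t *\<^sub>R l)) has_real_derivative (f \<bullet> dK x l)) (at 0))"
    and S_C2: "C2_on \<Omega> S"
    and S_in_H: "\<forall>z\<in>\<Omega>. S z = fn_of kx u z"
    and S_gen: "gen_fun_II dT D Phi \<Omega> S"
    and greedy: "\<forall>m. xs (Suc m) \<in> \<Omega> \<and> ls (Suc m) \<in> Basis \<and>
        (\<forall>x\<in>\<Omega>. \<forall>l\<in>Basis. \<bar>pdir (fn_of kx (e m)) x l\<bar>
                             \<le> \<bar>pdir (fn_of kx (e m)) (xs (Suc m)) (ls (Suc m))\<bar>)"
    and im_choice: "\<forall>m\<ge>1. im m \<in> {m+1..2*m} \<and>
        (\<forall>i\<in>{m+1..2*m}. Linf_grad \<Omega> (fn_of kx (e (im m))) \<le> Linf_grad \<Omega> (fn_of kx (e i)))"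
    and K_compact: "compact K"
    and M_ge: "M \<ge> 1"
    and solv_exact: "\<forall>x0\<in>K. I1 x0 + I2 (Phi x0) \<in> \<Omega> \<and>
        Phi x0 = x0 + dT *\<^sub>R Jmat (grad_of S (I1 x0 + I2 (Phi x0))) \<and>
        (\<forall>y. I1 x0 + I2 y \<in> \<Omega> \<and> y = x0 + dT *\<^sub>R Jmat (grad_of S (I1 x0 + I2 y)) \<longrightarrow> y = Phi x0)"
    and solv_approx: "\<forall>m\<ge>M. \<forall>x0\<in>K. I1 x0 + I2 (X m x0) \<in> \<Omega> \<and>
        X m x0 = x0 + dT *\<^sub>R Jmat (grad_of (fn_of kx (s (im m))) (I1 x0 + I2 (X m x0))) \<and>
        (\<forall>y. I1 x0 + I2 y \<in> \<Omega> \<and> y = x0 + dT *\<^sub>R Jmat (grad_of (fn_of kx (s (im m))) (I1 x0 + I2 y))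
              \<longrightarrow> y = X m x0)"
    and L_S_pos: "L_S > 0"
    and L_S_bdd: "bdd_above ((\<lambda>(x0, y). onorm (\<lambda>v. hess_app S (I1 x0 + I2 y) (I2 v)))
                     ` {(x0, y). x0 \<in> K \<and> I1 x0 + I2 y \<in> \<Omega>})"
    and L_S_def: "(SUP (x0, y)\<in>{(x0, y). x0 \<in> K \<and> I1 x0 + I2 y \<in> \<Omega>}.
                     onorm (\<lambda>v. hess_app S (I1 x0 + I2 y) (I2 v))) = L_S"
    and dT_small: "dT < 1 / L_S"
  shows "\<exists>C>0. \<forall>m\<ge>M. \<forall>x0\<in>K.
           norm (X m x0 - Phi x0)
             \<le> C * dT * sqrt (2 * real CARD('n)) * real m powr (-1/2) * norm (e (Suc m))
                * (\<Prod>i\<in>{m+1..2*m}. P i (xs (Suc i)) (ls (Suc i))) powr (1 / real m)"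
proof -
  have pdir_fn: "pdir (fn_of kx f) x l = f \<bullet> dK x l" if "x \<in> \<Omega>" "l \<in> Basis" for f x l
    using dK_prop that unfolding pdir_def by (auto intro!: DERIV_imp_deriv)
  have hess: "onorm (\<lambda>v. hess_app S (I1 x0 + I2 y) (I2 v)) \<le> L_S"
    if "x0 \<in> K" "I1 x0 + I2 y \<in> \<Omega>" for x0 y
    using cSUP_upper[OF _ L_S_bdd, of "(x0, y)"] L_S_def that by simp
  have "dT * L_S < 1" using dT_small L_S_pos by (simp add: field_simps)
  show ?thesis
  proof (intro exI[of _ "1 / (1 - dT * L_S)"] conjI allI impI ballI)
    show "1 / (1 - dT * L_S) > 0" using \<open>dT * L_S < 1\<close> by simp
    fix m x0 assume "M \<le> m" "x0 \<in> K"
    define z where "z = I1 x0 + I2 (X m x0)"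
    have "m > 0" using M_ge \<open>M \<le> m\<close> by simp
    have "I1 x0 + I2 (Phi x0) \<in> \<Omega>" "Phi x0 = x0 + dT *\<^sub>R Jmat (grad_of S (I1 x0 + I2 (Phi x0)))"
      using solv_exact \<open>x0 \<in> K\<close> by auto
    moreover have "z \<in> \<Omega>" "X m x0 = x0 + dT *\<^sub>R Jmat (grad_of (fn_of kx (s (im m))) z)"
      using solv_approx \<open>M \<le> m\<close> \<open>x0 \<in> K\<close> by (auto simp: z_def)
    moreover have "grad_of S z - grad_of (fn_of kx (s (im m))) z = grad_of (fn_of kx (e (im m))) z"
      using grad_of_cong_open[OF Omega_open \<open>z \<in> \<Omega>\<close>, of S "fn_of kx u"] S_in_H
        grad_of_fn_of_diff[of kx z dK u] pdir_fn \<open>z \<in> \<Omega>\<close>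
      by (simp add: s_def e_def)
    ultimately have "norm (X m x0 - Phi x0) \<le> dT / (1 - dT * L_S) * norm (grad_of (fn_of kx (e (im m))) z)"
      using implicit_step_stability[OF Omega_open Omega_convex S_C2, of x0 "Phi x0" dT "X m x0"
          "fn_of kx (s (im m))" L_S] hess[OF \<open>x0 \<in> K\<close>] dT_pos \<open>dT * L_S < 1\<close>
      unfolding z_def by (metis less_imp_le)
    also have "\<dots> \<le> dT / (1 - dT * L_S) * (sqrt DIM('n ps) * (norm (e (Suc m)) / sqrt m
                * (\<Prod>i\<in>{m+1..2*m}. P i (xs (Suc i)) (ls (Suc i))) powr (1 / m)))"
      using f_greedy_gradient_rate[OF pdir_fn greedy[unfolded e_def, THEN spec] \<open>m > 0\<close> _ \<open>z \<in> \<Omega>\<close>]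
        im_choice \<open>m > 0\<close> dT_pos \<open>dT * L_S < 1\<close>
      unfolding e_def P_def by (intro mult_left_mono) simp_all
    finally show "norm (X m x0 - Phi x0) \<le> 1 / (1 - dT * L_S) * dT * sqrt (2 * real CARD('n))
        * real m powr (-1/2) * norm (e (Suc m))
        * (\<Prod>i\<in>{m+1..2*m}. P i (xs (Suc i)) (ls (Suc i))) powr (1 / real m)"
      using \<open>m > 0\<close> by (simp add: powr_minus_divide powr_half_sqrt)
  qed
qed

end
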